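(* Let $0<q<1$. Then \[ \widetilde{\Gamma}_q(z+1)=(q^{-z}[z]_q)^{q^{-z}}\widetilde{\Gamma}_q(z),\qquad \widetilde{\Gamma}_q(1)=1,\qquad \frac{d^2}{dz^2}\log\widetilde{\Gamma}_q(z+1)\ge0\quad(z\ge0 \text{ real}). \] In particular, for every positive integer $n$, \[ \widetilde{\Gamma}_q(n+1)=q^{-\sum_{k=1}^nkq^{-k}}\prod_{k=1}^n([k]_q)^{q^{-k}}. \]
   Context: $[w]_q:=(1-q^w)/(1-q)$. For $\mathrm{Re}(s)>1$, $\tilde\zeta_q(s,z):=\sum_{n=0}^\infty q^{(n+z)(s-1)}[n+z]_q^{-s}$; this extends meromorphically in $s$ and is holomorphic at $s=0$. Define $\widetilde{\Gamma}_q(z):=\exp\bigl(\frac{\partial}{\partial s}\tilde\zeta_q(s,z)|_{s=0}-\frac{\partial}{\partial s}\tilde\zeta_q(s,1)|_{s=0}\bigr)$ for $\mathrm{Re}(z)>0$, extended meromorphically to $z\in\mathbb{C}$. *)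

theory Defs
  imports "HOL-Complex_Analysis.Complex_Analysis"
begin

definition qnum :: "real \<Rightarrow> complex \<Rightarrow> complex" where
  "qnum q w = (1 - complex_of_real q powr w) / (1 - complex_of_real q)"

definition tzeta_series :: "real \<Rightarrow> complex \<Rightarrow> complex \<Rightarrow> complex" where
  "tzeta_series q s z =
     (\<Sum>n. complex_of_real q powr ((of_nat n + z) * (s - 1)) * (qnum q (of_nat n + z)) powr (- s))"

text \<open>Analytic continuation in s (as a function of s, for fixed z): a function holomorphic on
  some connected open set containing the half-plane Re s > 1 and the point 0, agreeing with
  the series on Re s > 1.  By the identity theorem, its germ at 0 is uniquely determined
  (given that the meromorphic continuation is holomorphic at 0).\<close>
definition tzeta_cont :: "real \<Rightarrow> complex \<Rightarrow> complex \<Rightarrow> complex" where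
  "tzeta_cont q z = (SOME f. \<exists>S. open S \<and> connected S \<and> 0 \<in> S \<and> {s. 1 < Re s} \<subseteq> S \<and>
       f holomorphic_on S \<and> (\<forall>s. 1 < Re s \<longrightarrow> f s = tzeta_series q s z))"

definition tGamma :: "real \<Rightarrow> complex \<Rightarrow> complex" where
  "tGamma q z = exp (deriv (tzeta_cont q z) 0 - deriv (tzeta_cont q 1) 0)"

end

theory Submission
  imports Defs
begin

text \<open>
  Since \<open>[n+z]^(-s) = (1-q)^s (1 - q^(n+z))^(-s)\<close>, expanding binomially in \<open>q^(n+z)\<close> and
  summing the geometric series over \<open>n\<close> first gives
  \<open>tzeta(s,z) = (1-q)^s \<Sum>\<^sub>k (s)\<^sub>k / k! \<cdot> q^(z(s+k-1)) / (1 - q^(s+k-1))\<close>.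
  The right-hand side is holomorphic in \<open>s\<close> off a countable discrete set not containing \<open>0\<close>,
  so it is the continuation, and differentiating at \<open>s = 0\<close> gives, up to an additive constant,
  \<open>log tGamma(z) = (a + b z) q^(-z) - z + \<Sum>\<^sub>k q^(z(k+1)) / ((k+2)(1 - q^(k+1)))\<close> with explicit
  real \<open>a\<close>, \<open>b\<close>. Differentiating twice, every coefficient is non-negative on real \<open>z \<ge> 1\<close>
  (for \<open>q^(-z)\<close> this uses \<open>ln q \<ge> 1 - 1/q\<close>), which is the log-convexity. The functional
  equation is the identity \<open>tzeta(s,z) = q^(z(s-1)) [z]^(-s) + tzeta(s,z+1)\<close> continued to
  \<open>s = 0\<close> and differentiated there; iterating it gives the values at the integers.
\<close>

section \<open>Binomial and double series\<close>

lemma norm_pochhammer_le: "norm (pochhammer (s::complex) k) \<le> pochhammer (norm s) k"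
  unfolding pochhammer_prod prod_norm[symmetric]
  by (intro prod_mono) (auto intro: order.trans[OF norm_triangle_ineq])

lemma pochhammer_mono:
  assumes "0 \<le> a" "a \<le> (b::real)"
  shows "pochhammer a n \<le> pochhammer b n"
  unfolding pochhammer_prod by (intro prod_mono) (use assms in auto)

lemma power_le_pochhammer:
  assumes "0 \<le> (a::real)"
  shows "a ^ n \<le> pochhammer a n"
  unfolding pochhammer_prod using prod_mono[of "{0..<n}" "\<lambda>_. a" "\<lambda>i. a + of_nat i"] assms
  by simp

lemma binomial_series_pochhammer:
  assumes "norm (u::complex) < 1"
  shows "(\<lambda>k. pochhammer s k / fact k * u ^ k) sums ((1 - u) powr (- s))"
proof -
  have "((-s) gchoose k) * (-u) ^ k = pochhammer s k / fact k * u ^ k" for k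
  proof -
    have "(-1::complex) ^ k * (-1) ^ k = 1" by (simp flip: power_mult_distrib)
    then show ?thesis by (simp add: gbinomial_pochhammer power_minus[of u] field_simps)
  qed
  with gen_binomial_complex[of "-u" "-s"] assms show ?thesis by simp
qed

lemma binomial_series_pochhammer_real:
  assumes "\<bar>r\<bar> < (1::real)"
  shows "(\<lambda>k. pochhammer a k / fact k * r ^ k) sums ((1 - r) powr (- a))"
proof -
  have "((-a) gchoose k) * (-r) ^ k = pochhammer a k / fact k * r ^ k" for k
  proof -
    have "(-1::real) ^ k * (-1) ^ k = 1" by (simp flip: power_mult_distrib)
    then show ?thesis by (simp add: gbinomial_pochhammer power_minus[of r] field_simps)
  qed
  with gen_binomial_real[of "-r" "-a"] assms show ?thesis by simp
qed

text \<open>The coefficients are dominated by binomial coefficients: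
  \<open>(k+1)^j \<le> (k+1)\<cdots>(k+j) = j! \<cdot> pochhammer (j+1) k / k!\<close>.\<close>
lemma summable_power_mult_geometric:
  assumes "0 \<le> r" "r < (1::real)"
  shows "summable (\<lambda>k. real (k + 1) ^ j * r ^ k)"
proof (rule summable_comparison_test')
  show "summable (\<lambda>k. fact j * (pochhammer (real j + 1) k / fact k * r ^ k))"
    using binomial_series_pochhammer_real[of r "real j + 1"] assms
    by (intro summable_mult) (auto intro: sums_summable)
  fix k
  have "fact (j + k) = (fact j * pochhammer (real j + 1) k :: real)"
    "fact (k + j) = (fact k * pochhammer (real k + 1) j :: real)"
    using pochhammer_product'[of "1::real" j k] pochhammer_product'[of "1::real" k j]
    by (simp_all add: pochhammer_fact add_ac)
  then have "fact j * (pochhammer (real j + 1) k / fact k * r ^ k) = pochhammer (real k + 1) j * r ^ k"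
    by (simp add: add.commute field_simps)
  moreover have "real (k + 1) ^ j \<le> pochhammer (real k + 1) j"
    using power_le_pochhammer[of "real k + 1" j] by (simp add: add.commute)
  ultimately show "norm (real (k + 1) ^ j * r ^ k) \<le> fact j * (pochhammer (real j + 1) k / fact k * r ^ k)"
    using assms by (simp add: mult_right_mono)
qed

lemma double_series_sums_swap:
  fixes a :: "nat \<Rightarrow> nat \<Rightarrow> complex"
  assumes bound: "\<And>n k. norm (a n k) \<le> B n * C k"
    and B: "summable B" "\<And>n. 0 \<le> B n" and C: "summable C" "\<And>k. 0 \<le> C k"
    and rows: "\<And>n. (\<lambda>k. a n k) sums r n" and cols: "\<And>k. (\<lambda>n. a n k) sums c k"
  shows "summable c" and "r sums (\<Sum>k. c k)"
proof -
  have has_sum_of_sums: "(f has_sum x) UNIV" if "f summable_on UNIV" "f sums x" for f :: "nat \<Rightarrow> complex" and x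
    using that sums_unique2[OF has_sum_imp_sums[OF has_sum_infsum]] has_sum_infsum by metis
  have BC: "(\<lambda>(n, k). B n * C k) summable_on UNIV \<times> UNIV"
  proof (rule summable_on_SigmaI)
    show "((\<lambda>k. case (n, k) of (n, k) \<Rightarrow> B n * C k) has_sum B n * suminf C) UNIV" for n
      using has_sum_cmult_right[OF sums_nonneg_imp_has_sum[OF summable_sums[OF C(1)] C(2)]] by simp
    show "(\<lambda>n. B n * suminf C) summable_on UNIV"
      using sums_nonneg_imp_has_sum[OF summable_sums[OF B(1)] B(2)]
      by (intro summable_on_cmult_left) (auto simp: summable_on_def)
  qed (use B C in auto)
  have "(\<lambda>x. norm (case x of (n, k) \<Rightarrow> a n k)) summable_on UNIV \<times> UNIV"
    by (rule Infinite_Sum.abs_summable_on_comparison_test'[OF BC]) (simp add: case_prod_beta bound)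
  then have A: "(\<lambda>(n, k). a n k) summable_on UNIV \<times> UNIV"
    by (rule abs_summable_summable)
  define S where "S = infsum (\<lambda>(n, k). a n k) (UNIV \<times> UNIV)"
  have "(r has_sum S) UNIV"
  proof (rule has_sum_Sigma'[where f = "\<lambda>(n, k). a n k" and A = UNIV and B = "\<lambda>_. UNIV"])
    show "((\<lambda>(n, k). a n k) has_sum S) (UNIV \<times> UNIV)" using A by (simp add: S_def)
    show "((\<lambda>k. case (n, k) of (n, k) \<Rightarrow> a n k) has_sum r n) UNIV" for n
      using has_sum_of_sums[OF summable_on_SigmaD1[OF A] rows] by simp
  qed
  moreover have "(c has_sum S) UNIV"
  proof (rule has_sum_Sigma'[where f = "\<lambda>(k, n). a n k" and A = UNIV and B = "\<lambda>_. UNIV"])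
    show "((\<lambda>(k, n). a n k) has_sum S) (UNIV \<times> UNIV)"
      using A has_sum_swap[where f = "\<lambda>(n, k). a n k" and S = S and A = UNIV and B = UNIV] by (simp add: S_def)
    then have A': "(\<lambda>(k, n). a n k) summable_on UNIV \<times> UNIV" by (auto simp: summable_on_def)
    show "((\<lambda>n. case (k, n) of (k, n) \<Rightarrow> a n k) has_sum c k) UNIV" for k
      using has_sum_of_sums[OF summable_on_SigmaD1[where f = "\<lambda>k n. a n k", OF A' UNIV_I] cols] by simp
  qed
  ultimately have "r sums S" "c sums S" by (auto intro: has_sum_imp_sums)
  then show "summable c" "r sums (\<Sum>k. c k)" by (auto simp: sums_iff)
qed

section \<open>Termwise differentiation and analytic continuation\<close>

lemma has_field_derivative_suminf:
  fixes f f' :: "nat \<Rightarrow> complex \<Rightarrow> complex"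
  assumes "open S" "x \<in> S"
    and "\<And>n x. x \<in> S \<Longrightarrow> (f n has_field_derivative f' n x) (at x)"
    and "\<And>x. x \<in> S \<Longrightarrow> \<exists>d h. 0 < d \<and> summable h \<and>
           (\<forall>\<^sub>F n in sequentially. \<forall>y\<in>ball x d \<inter> S. norm (f n y) \<le> h n)"
  shows "((\<lambda>x. \<Sum>n. f n x) has_field_derivative (\<Sum>n. f' n x)) (at x)"
proof -
  obtain g g' where g: "\<And>x. x \<in> S \<Longrightarrow> (\<lambda>n. f n x) sums g x \<and> (\<lambda>n. f' n x) sums g' x \<and>
      (g has_field_derivative g' x) (at x)"
    using series_and_derivative_comparison_local[OF assms(1,3,4)] by metis
  have "(g has_field_derivative (\<Sum>n. f' n x)) (at x)"
    using g[OF assms(2)] sums_unique by metis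
  then show ?thesis
    by (rule has_field_derivative_transform_within_open[OF _ assms(1,2)]) (use g sums_unique in metis)
qed

lemma higher_deriv_Ln_of_exp:
  assumes "open S" "x \<in> S" "isCont g x" "\<bar>Im (g x)\<bar> < pi" "\<And>w. w \<in> S \<Longrightarrow> f w = exp (g w)"
  shows "(deriv ^^ n) (\<lambda>w. Ln (f w)) x = (deriv ^^ n) g x"
proof (rule higher_deriv_cong_ev[OF _ refl])
  have "isCont (\<lambda>w. \<bar>Im (g w)\<bar>) x"
    using isCont_Im[OF assms(3)] by (intro continuous_intros)
  then have "((\<lambda>w. \<bar>Im (g w)\<bar>) \<longlongrightarrow> \<bar>Im (g x)\<bar>) (nhds x)"
    by (metis isCont_def tendsto_at_iff_tendsto_nhds)
  then have "\<forall>\<^sub>F w in nhds x. \<bar>Im (g w)\<bar> < pi"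
    using assms(4) by (rule order_tendstoD)
  moreover have "\<forall>\<^sub>F w in nhds x. w \<in> S"
    using assms(1,2) by (rule eventually_nhds_in_open)
  ultimately show "\<forall>\<^sub>F w in nhds x. Ln (f w) = g w"
    by eventually_elim (use assms(5) in \<open>auto intro!: Ln_exp\<close>)
qed

text \<open>The domain on which \<open>tzeta_cont\<close> is holomorphic may meet \<open>P\<close>; removing the countable
  set \<open>P\<close> keeps it connected, so the identity theorem still applies.\<close>
lemma deriv_tzeta_cont_eq:
  assumes P: "countable P" "closed P" "0 \<notin> P" "\<And>s. 1 < Re s \<Longrightarrow> s \<notin> P"
    and f: "f holomorphic_on - P" "\<And>s. 1 < Re s \<Longrightarrow> f s = tzeta_series q s z"
  shows "deriv (tzeta_cont q z) 0 = deriv f 0"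
proof -
  let ?H = "{s. 1 < Re s}"
  have "connected (- P)"
    using connected_open_diff_countable[of UNIV P] P(1) by (simp add: Compl_eq_Diff_UNIV connected_UNIV)
  then have "\<exists>g S. open S \<and> connected S \<and> 0 \<in> S \<and> ?H \<subseteq> S \<and> g holomorphic_on S \<and>
      (\<forall>s. 1 < Re s \<longrightarrow> g s = tzeta_series q s z)"
    using P f by (intro exI[of _ f] exI[of _ "- P"]) (auto simp: open_Compl)
  then have "\<exists>S. open S \<and> connected S \<and> 0 \<in> S \<and> ?H \<subseteq> S \<and> tzeta_cont q z holomorphic_on S \<and>
      (\<forall>s. 1 < Re s \<longrightarrow> tzeta_cont q z s = tzeta_series q s z)"
    unfolding tzeta_cont_def by (rule someI_ex)
  then obtain S where S: "open S" "connected S" "0 \<in> S" "?H \<subseteq> S" "tzeta_cont q z holomorphic_on S"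
      "\<And>s. 1 < Re s \<Longrightarrow> tzeta_cont q z s = tzeta_series q s z"
    by blast
  have U: "open (S - P)" "connected (S - P)" "?H \<subseteq> S - P"
    using S(1,2,4) P by (auto intro: connected_open_diff_countable)
  have "tzeta_cont q z w = f w" if "w \<in> S - P" for w
  proof (rule analytic_continuation_open[where f = "tzeta_cont q z" and g = f, OF open_halfspace_Re_gt U(1) _ U(2,3)])
    show "?H \<noteq> {}" by (auto intro!: exI[of _ 2])
    show "tzeta_cont q z holomorphic_on S - P" using S(5) by (rule holomorphic_on_subset) blast
    show "f holomorphic_on S - P" using f(1) by (rule holomorphic_on_subset) blast
  qed (use S(6) f(2) that in auto)
  then have "\<forall>\<^sub>F w in nhds 0. tzeta_cont q z w = f w"
    using U(1) S(3) P(3) eventually_nhds by blast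
  then show ?thesis by (rule deriv_cong_ev) simp
qed

section \<open>Powers of \<open>q\<close> and the expansion of the series\<close>

locale q_parameter =
  fixes q :: real
  assumes q_pos: "0 < q" and q_less_1: "q < 1"
begin

lemma ln_q_neg: "ln q < 0"
  using q_pos q_less_1 by simp

definition qpow :: "complex \<Rightarrow> complex" where
  "qpow w = exp (of_real (ln q) * w)"

lemma powr_eq_qpow: "complex_of_real q powr w = qpow w"
  using q_pos by (simp add: powr_def qpow_def Ln_of_real mult.commute)

lemma qpow_add: "qpow (v + w) = qpow v * qpow w"
  by (simp add: qpow_def distrib_left exp_add)

lemma qpow_zero [simp]: "qpow 0 = 1"
  by (simp add: qpow_def)

lemma qpow_of_nat_mult: "qpow (of_nat n * w) = qpow w ^ n"
  by (simp add: qpow_def exp_of_nat_mult[symmetric] algebra_simps)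

lemma norm_qpow: "norm (qpow w) = exp (ln q * Re w)"
  by (simp add: qpow_def)

lemma qpow_of_real: "qpow (of_real x) = of_real (q powr x)"
  using q_pos by (simp add: qpow_def powr_def mult.commute flip: exp_of_real)

lemma qpow_eq_1_iff: "qpow w = 1 \<longleftrightarrow> Re w = 0 \<and> (\<exists>n::int. Im w * ln q = 2 * of_int n * pi)"
  using ln_q_neg by (simp add: qpow_def exp_eq_1 mult.commute)

lemma norm_qpow_less_1: "0 < Re w \<Longrightarrow> norm (qpow w) < 1"
  using ln_q_neg by (simp add: norm_qpow mult_neg_pos)

lemma has_field_derivative_qpow [derivative_intros]:
  "(f has_field_derivative f') (at x within S) \<Longrightarrow>
   ((\<lambda>x. qpow (f x)) has_field_derivative (of_real (ln q) * f' * qpow (f x))) (at x within S)"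
  unfolding qpow_def by (auto intro!: derivative_eq_intros)

lemma holomorphic_on_qpow [holomorphic_intros]:
  "f holomorphic_on S \<Longrightarrow> (\<lambda>x. qpow (f x)) holomorphic_on S"
  unfolding qpow_def by (auto intro!: holomorphic_intros)

lemma qnum_eq: "qnum q w = (1 - qpow w) / of_real (1 - q)"
  by (simp add: qnum_def powr_eq_qpow)

lemma qnum_nonzero: "0 < Re w \<Longrightarrow> qnum q w \<noteq> 0"
  using norm_qpow_less_1[of w] q_less_1 by (auto simp: qnum_eq)

lemma qnum_powr:
  assumes "0 < Re w"
  shows "qnum q w powr (- s) = exp (s * of_real (ln (1 - q))) * (1 - qpow w) powr (- s)"
proof -
  have nz: "1 - qpow w \<noteq> 0" using norm_qpow_less_1[OF assms] by auto
  have Ln_qnum: "Ln (qnum q w) = Ln (1 - qpow w) - of_real (ln (1 - q))"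
    unfolding qnum_eq by (rule Ln_divide_of_real) (use q_less_1 nz in auto)
  have "qnum q w powr (- s) = exp (- s * Ln (qnum q w))"
    using qnum_nonzero[OF assms] by (simp add: powr_def)
  also have "\<dots> = exp (s * of_real (ln (1 - q))) * exp (- s * Ln (1 - qpow w))"
    unfolding Ln_qnum by (simp add: algebra_simps flip: exp_add)
  also have "exp (- s * Ln (1 - qpow w)) = (1 - qpow w) powr (- s)"
    using nz by (simp add: powr_def)
  finally show ?thesis .
qed

definition tzeta_term :: "nat \<Rightarrow> complex \<Rightarrow> complex \<Rightarrow> complex" where
  "tzeta_term k z s =
     pochhammer s k / fact k * qpow (z * (s + of_nat k - 1)) / (1 - qpow (s + of_nat k - 1))"

lemma norm_tzeta_double_term_le:
  "norm (pochhammer s k / fact k * qpow ((of_nat n + z) * (s + of_nat k - 1)))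
    \<le> norm (qpow (s - 1)) ^ n * (norm (qpow (z * (s - 1))) * (pochhammer (norm s) k / fact k * norm (qpow z) ^ k))"
proof -
  have "(of_nat n + z) * (s + of_nat k - 1) = z * (s - 1) + of_nat n * (s - 1) + of_nat k * z + of_nat n * of_nat k"
    by (simp add: algebra_simps)
  then have "qpow ((of_nat n + z) * (s + of_nat k - 1))
      = qpow (z * (s - 1)) * qpow (s - 1) ^ n * qpow z ^ k * qpow (of_nat k) ^ n"
    by (simp only: qpow_add qpow_of_nat_mult)
  then have "norm (pochhammer s k / fact k * qpow ((of_nat n + z) * (s + of_nat k - 1)))
      = norm (pochhammer s k / fact k) * (norm (qpow (z * (s - 1))) * norm (qpow (s - 1)) ^ n
        * norm (qpow z) ^ k) * norm (qpow (of_nat k)) ^ n"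
    by (simp add: norm_mult norm_power norm_divide mult_ac)
  also have "\<dots> \<le> pochhammer (norm s) k / fact k
      * (norm (qpow (z * (s - 1))) * norm (qpow (s - 1)) ^ n * norm (qpow z) ^ k) * 1"
  proof (intro mult_mono order.refl)
    show "norm (pochhammer s k / fact k) \<le> pochhammer (norm s) k / fact k"
      using norm_pochhammer_le[of s k] by (simp add: norm_divide divide_right_mono)
    show "norm (qpow (of_nat k)) ^ n \<le> 1"
      using ln_q_neg by (auto simp: norm_qpow mult_nonpos_nonneg intro!: power_le_one)
  qed (use order.trans[OF zero_le_power power_le_pochhammer, of "norm s"] in auto)
  finally show ?thesis by (simp add: mult_ac)
qed

lemma sums_tzeta_double_term_row:
  assumes "0 < Re z"
  shows "(\<lambda>k. pochhammer s k / fact k * qpow ((of_nat n + z) * (s + of_nat k - 1)))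
    sums (qpow ((of_nat n + z) * (s - 1)) * (1 - qpow (of_nat n + z)) powr (- s))"
proof -
  have "(of_nat n + z) * (s + of_nat k - 1) = (of_nat n + z) * (s - 1) + of_nat k * (of_nat n + z)" for k
    by (simp add: algebra_simps)
  then have "pochhammer s k / fact k * qpow ((of_nat n + z) * (s + of_nat k - 1))
      = qpow ((of_nat n + z) * (s - 1)) * (pochhammer s k / fact k * qpow (of_nat n + z) ^ k)" for k
    by (simp only: qpow_add qpow_of_nat_mult mult_ac)
  moreover have "norm (qpow (of_nat n + z)) < 1" using assms by (intro norm_qpow_less_1) simp
  ultimately show ?thesis by (simp only:) (intro sums_mult binomial_series_pochhammer)
qed

lemma sums_tzeta_double_term_column:
  assumes "1 < Re s"
  shows "(\<lambda>n. pochhammer s k / fact k * qpow ((of_nat n + z) * (s + of_nat k - 1))) sums tzeta_term k z s"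
proof -
  have "(of_nat n + z) * (s + of_nat k - 1) = z * (s + of_nat k - 1) + of_nat n * (s + of_nat k - 1)" for n
    by (simp add: algebra_simps)
  then have "pochhammer s k / fact k * qpow ((of_nat n + z) * (s + of_nat k - 1))
      = pochhammer s k / fact k * qpow (z * (s + of_nat k - 1)) * qpow (s + of_nat k - 1) ^ n" for n
    by (simp only: qpow_add qpow_of_nat_mult mult_ac)
  moreover have "norm (qpow (s + of_nat k - 1)) < 1" using assms by (intro norm_qpow_less_1) simp
  ultimately show ?thesis
    using geometric_sums unfolding tzeta_term_def divide_inverse by (simp only:) (intro sums_mult, simp)
qed

lemma tzeta_series_expansion:
  assumes z: "0 < Re z" and s: "1 < Re s"
  shows "summable (\<lambda>k. tzeta_term k z s)"
    and "(\<lambda>n. complex_of_real q powr ((of_nat n + z) * (s - 1)) * qnum q (of_nat n + z) powr (- s))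
           sums (exp (s * of_real (ln (1 - q))) * (\<Sum>k. tzeta_term k z s))"
proof -
  define r where "r n = qpow ((of_nat n + z) * (s - 1)) * (1 - qpow (of_nat n + z)) powr (- s)" for n
  define C where "C k = norm (qpow (z * (s - 1))) * (pochhammer (norm s) k / fact k * norm (qpow z) ^ k)"
    for k
  have bound: "norm (pochhammer s k / fact k * qpow ((of_nat n + z) * (s + of_nat k - 1)))
      \<le> norm (qpow (s - 1)) ^ n * C k" for n k
    unfolding C_def by (rule norm_tzeta_double_term_le)
  have rows: "(\<lambda>k. pochhammer s k / fact k * qpow ((of_nat n + z) * (s + of_nat k - 1))) sums r n" for n
    unfolding r_def using z by (rule sums_tzeta_double_term_row)
  have cols: "(\<lambda>n. pochhammer s k / fact k * qpow ((of_nat n + z) * (s + of_nat k - 1)))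
      sums tzeta_term k z s" for k
    using s by (rule sums_tzeta_double_term_column)
  have "summable (\<lambda>n. norm (qpow (s - 1)) ^ n)"
    using norm_qpow_less_1[of "s - 1"] s by simp
  moreover have "summable C"
    using binomial_series_pochhammer_real[of "norm (qpow z)" "norm s"] norm_qpow_less_1[OF z]
    unfolding C_def by (intro summable_mult) (auto intro: sums_summable)
  moreover have "0 \<le> C k" for k
    using order.trans[OF zero_le_power power_le_pochhammer, of "norm s"] by (simp add: C_def)
  ultimately have "summable (\<lambda>k. tzeta_term k z s)" "r sums (\<Sum>k. tzeta_term k z s)"
    using double_series_sums_swap[OF bound _ _ _ _ rows cols] by auto
  then show "summable (\<lambda>k. tzeta_term k z s)" by blast
  have "complex_of_real q powr ((of_nat n + z) * (s - 1)) * qnum q (of_nat n + z) powr (- s)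
      = exp (s * of_real (ln (1 - q))) * r n" for n
    using qnum_powr[of "of_nat n + z" s] z by (simp add: powr_eq_qpow r_def)
  with sums_mult[OF \<open>r sums _\<close>] show "(\<lambda>n. complex_of_real q powr ((of_nat n + z) * (s - 1))
      * qnum q (of_nat n + z) powr (- s)) sums (exp (s * of_real (ln (1 - q))) * (\<Sum>k. tzeta_term k z s))"
    by simp
qed

section \<open>Continuation to \<open>s = 0\<close>\<close>

text \<open>\<open>s = 0\<close> is excluded: among the summands only \<open>k = 1\<close> is singular there, and that
  singularity is removable (see \<open>qpow_ratio\<close>).\<close>
definition tzeta_poles :: "complex set" where
  "tzeta_poles = {s. s \<noteq> 0 \<and> (\<exists>k::nat. qpow (s + of_nat k - 1) = 1)}"

lemma tzeta_polesE:
  assumes "s \<in> tzeta_poles"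
  obtains k :: nat and n :: int where "Re s = 1 - real k" "Im s = 2 * of_int n * pi / ln q"
proof -
  from assms obtain k :: nat and n :: int where "Re s + real k - 1 = 0" "Im s * ln q = 2 * of_int n * pi"
    by (auto simp: tzeta_poles_def qpow_eq_1_iff)
  with ln_q_neg that show ?thesis by (simp add: field_simps)
qed

lemma countable_tzeta_poles: "countable tzeta_poles"
proof (rule countable_subset)
  show "tzeta_poles \<subseteq> (\<lambda>(k::nat, n::int). Complex (1 - real k) (2 * of_int n * pi / ln q)) ` UNIV"
  proof
    fix s assume "s \<in> tzeta_poles"
    then obtain k :: nat and n :: int where "Re s = 1 - real k" "Im s = 2 * of_int n * pi / ln q"
      by (rule tzeta_polesE)
    then have "s = (\<lambda>(k, n). Complex (1 - real k) (2 * of_int n * pi / ln q)) (k, n)"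
      by (simp add: complex_eq_iff)
    then show "s \<in> (\<lambda>(k::nat, n::int). Complex (1 - real k) (2 * of_int n * pi / ln q)) ` UNIV"
      by blast
  qed
qed simp

lemma closed_tzeta_poles: "closed tzeta_poles"
proof (rule discrete_imp_closed)
  define c where "c = 2 * pi / - ln q"
  have c: "0 < c" using ln_q_neg by (simp add: c_def divide_pos_neg)
  show "0 < min 1 c" using c by simp
  show "\<forall>x\<in>tzeta_poles. \<forall>y\<in>tzeta_poles. dist y x < min 1 c \<longrightarrow> y = x"
  proof (intro ballI impI)
    fix x y assume "x \<in> tzeta_poles" "y \<in> tzeta_poles" and d: "dist y x < min 1 c"
    then obtain k1 k2 :: nat and n1 n2 :: int where
      x: "Re x = 1 - real k1" "Im x = 2 * of_int n1 * pi / ln q" and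
      y: "Re y = 1 - real k2" "Im y = 2 * of_int n2 * pi / ln q"
      by (metis tzeta_polesE)
    have "\<bar>Re y - Re x\<bar> < 1" "\<bar>Im y - Im x\<bar> < c"
      using d abs_Re_le_cmod[of "y - x"] abs_Im_le_cmod[of "y - x"] by (auto simp: dist_norm)
    moreover have "Im y - Im x = - c * of_int (n2 - n1)"
      using ln_q_neg by (simp add: x y c_def field_simps)
    ultimately have "\<bar>real k1 - real k2\<bar> < 1" "c * \<bar>of_int (n2 - n1)\<bar> < c * 1"
      using c by (auto simp: x y abs_mult)
    then have "k1 = k2" "n1 = n2"
      using c by (auto simp del: of_int_diff)
    then show "y = x" by (simp add: complex_eq_iff x y)
  qed
qed

lemma zero_notin_tzeta_poles: "0 \<notin> tzeta_poles"
  by (simp add: tzeta_poles_def)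

lemma notin_tzeta_poles_if_Re_gt_1: "1 < Re s \<Longrightarrow> s \<notin> tzeta_poles"
  by (auto elim: tzeta_polesE)

lemma connected_Compl_tzeta_poles: "connected (- tzeta_poles)"
  using connected_open_diff_countable[of UNIV tzeta_poles] countable_tzeta_poles
  by (simp add: Compl_eq_Diff_UNIV connected_UNIV)

lemma qpow_ne_1_off_tzeta_poles:
  assumes "s \<notin> tzeta_poles" "s \<noteq> 0 \<or> k \<noteq> 1"
  shows "qpow (s + of_nat k - 1) \<noteq> 1"
proof (cases "s = 0")
  case True
  with assms(2) show ?thesis by (auto simp: qpow_eq_1_iff)
qed (use assms in \<open>auto simp: tzeta_poles_def\<close>)

lemma holomorphic_tzeta_term: "k \<noteq> 1 \<Longrightarrow> tzeta_term k z holomorphic_on - tzeta_poles"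
  unfolding tzeta_term_def using qpow_ne_1_off_tzeta_poles
  by (auto intro!: holomorphic_intros)

definition qpow_ratio :: "complex \<Rightarrow> complex" where
  "qpow_ratio s = (if s = 0 then - 1 / of_real (ln q) else s / (1 - qpow s))"

lemma holomorphic_qpow_ratio: "qpow_ratio holomorphic_on - tzeta_poles"
proof (rule no_isolated_singularity'[of "{0}"])
  have "qpow s \<noteq> 1" if "s \<notin> tzeta_poles" "s \<noteq> 0" for s
    using qpow_ne_1_off_tzeta_poles[of s 1] that by simp
  then have "(\<lambda>s. s / (1 - qpow s)) holomorphic_on - tzeta_poles - {0}"
    by (auto intro!: holomorphic_intros)
  then show "qpow_ratio holomorphic_on - tzeta_poles - {0}"
    by (rule holomorphic_transform) (simp add: qpow_ratio_def)
  have "((\<lambda>s. (qpow s - qpow 0) / (s - 0)) \<longlongrightarrow> of_real (ln q)) (at 0)"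
    using has_field_derivative_qpow[OF DERIV_ident, of 0 UNIV] by (simp add: has_field_derivative_iff)
  then have "((\<lambda>s. - 1 / ((qpow s - 1) / s)) \<longlongrightarrow> - 1 / of_real (ln q)) (at 0)"
    using ln_q_neg by (intro tendsto_intros) auto
  moreover have "\<forall>\<^sub>F s in at 0. - 1 / ((qpow s - 1) / s) = qpow_ratio s"
    by (auto simp: eventually_at_filter qpow_ratio_def divide_simps algebra_simps)
  ultimately have "(qpow_ratio \<longlongrightarrow> qpow_ratio 0) (at 0)"
    unfolding qpow_ratio_def[of 0] by (auto intro: Lim_transform_eventually)
  then show "(qpow_ratio \<longlongrightarrow> qpow_ratio z) (at z within - tzeta_poles)" if "z \<in> {0}" for z
    using that by (auto intro: tendsto_within_subset)
qed (use closed_tzeta_poles in auto)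

lemma norm_qpow_shift_le:
  assumes "norm y \<le> R"
  shows "norm (qpow (z * (y + of_nat (k + 1)))) \<le> exp (- ln q * (norm z * (R + 1))) * norm (qpow z) ^ (k + 2)"
proof -
  have "z * (y + of_nat (k + 1)) = z * (y - 1) + of_nat (k + 2) * z" by (simp add: algebra_simps)
  then have "qpow (z * (y + of_nat (k + 1))) = qpow (z * (y - 1)) * qpow z ^ (k + 2)"
    by (simp only: qpow_add qpow_of_nat_mult)
  moreover have "norm (z * (y - 1)) \<le> norm z * (R + 1)"
    using norm_triangle_ineq4[of y 1] assms by (auto simp: norm_mult intro!: mult_left_mono)
  then have "- (norm z * (R + 1)) \<le> Re (z * (y - 1))"
    using abs_Re_le_cmod[of "z * (y - 1)"] by linarith
  from mult_left_mono_neg[OF this, of "ln q"]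
  have "norm (qpow (z * (y - 1))) \<le> exp (- ln q * (norm z * (R + 1)))"
    using ln_q_neg by (simp add: norm_qpow)
  ultimately show ?thesis by (simp add: norm_mult norm_power mult_right_mono del: power_Suc)
qed

lemma norm_one_minus_qpow_ge:
  assumes "ln (1 / 2) / ln q \<le> Re w"
  shows "1 / 2 \<le> norm (1 - qpow w)"
proof -
  have "ln q * Re w \<le> ln (1 / 2)"
    using assms ln_q_neg by (simp add: divide_le_eq mult.commute)
  then have "norm (qpow w) \<le> 1 / 2"
    by (simp add: norm_qpow exp_le_cancel_iff[symmetric, of _ "ln (1 / 2)"] del: exp_le_cancel_iff)
  then show ?thesis using norm_triangle_ineq2[of 1 "qpow w"] by simp
qed

text \<open>For large \<open>k\<close> the denominator \<open>1 - q^(s+k-1)\<close> stays away from \<open>0\<close>, uniformly for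
  bounded \<open>s\<close>; this makes the tail of the expansion converge locally uniformly.\<close>
lemma norm_tzeta_term_le:
  assumes "norm y \<le> R" "R + ln (1 / 2) / ln q \<le> real k"
  shows "norm (tzeta_term (k + 2) z y)
    \<le> 2 * exp (- ln q * (norm z * (R + 1))) * (pochhammer R (k + 2) / fact (k + 2) * norm (qpow z) ^ (k + 2))"
proof -
  define w where "w = y + of_nat (k + 1)"
  have R: "0 \<le> R" using assms(1) norm_ge_zero order.trans by blast
  have "norm (pochhammer y (k + 2)) \<le> pochhammer R (k + 2)"
    using norm_pochhammer_le[of y] pochhammer_mono[OF norm_ge_zero assms(1)] by (rule order.trans)
  then have poch_le: "norm (pochhammer y (k + 2) / fact (k + 2)) \<le> pochhammer R (k + 2) / fact (k + 2)"
    unfolding norm_divide norm_fact by (rule divide_right_mono) simp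
  have denom_ge: "1 / 2 \<le> norm (1 - qpow w)"
    using assms abs_Re_le_cmod[of y] by (intro norm_one_minus_qpow_ge) (simp add: w_def)
  have "tzeta_term (k + 2) z y = pochhammer y (k + 2) / fact (k + 2) * qpow (z * w) / (1 - qpow w)"
    by (simp add: tzeta_term_def w_def add_ac)
  then have "norm (tzeta_term (k + 2) z y)
      = norm (pochhammer y (k + 2) / fact (k + 2)) * norm (qpow (z * w)) / norm (1 - qpow w)"
    by (simp only: norm_mult norm_divide)
  also have "\<dots> \<le> (pochhammer R (k + 2) / fact (k + 2))
      * (exp (- ln q * (norm z * (R + 1))) * norm (qpow z) ^ (k + 2)) / (1 / 2)"
  proof (intro frac_le mult_mono)
    show PA: "0 \<le> pochhammer R (k + 2) / fact (k + 2)"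
      using power_le_pochhammer[OF R, of "k + 2"] zero_le_power[OF R, of "k + 2"] by simp
    show "0 \<le> pochhammer R (k + 2) / fact (k + 2)
        * (exp (- ln q * (norm z * (R + 1))) * norm (qpow z) ^ (k + 2))"
      by (intro mult_nonneg_nonneg PA) simp_all
  qed (use poch_le norm_qpow_shift_le[OF assms(1)] denom_ge in \<open>auto simp: w_def\<close>)
  finally show ?thesis by (simp add: mult_ac)
qed

definition tzeta_tail :: "complex \<Rightarrow> complex \<Rightarrow> complex" where
  "tzeta_tail z s = (\<Sum>k. tzeta_term (k + 2) z s)"

lemma has_field_derivative_tzeta_tail:
  assumes z: "0 < Re z" and s: "s \<notin> tzeta_poles"
  shows "(tzeta_tail z has_field_derivative (\<Sum>k. deriv (tzeta_term (k + 2) z) s)) (at s)"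
  unfolding tzeta_tail_def
proof (rule has_field_derivative_suminf)
  show "open (- tzeta_poles)" using closed_tzeta_poles by auto
  show "(tzeta_term (n + 2) z has_field_derivative deriv (tzeta_term (n + 2) z) x) (at x)"
    if "x \<in> - tzeta_poles" for n x
    using holomorphic_tzeta_term[of "n + 2" z] \<open>open (- tzeta_poles)\<close> that
    by (intro holomorphic_derivI) auto
  fix x :: complex
  define R where "R = norm x + 1"
  define h where "h k = 2 * exp (- ln q * (norm z * (R + 1)))
      * (pochhammer R (k + 2) / fact (k + 2) * norm (qpow z) ^ (k + 2))" for k
  obtain N :: nat where N: "R + ln (1 / 2) / ln q \<le> real N"
    using real_arch_simple by blast
  have "summable (\<lambda>k. pochhammer R k / fact k * norm (qpow z) ^ k)"
    using binomial_series_pochhammer_real[of "norm (qpow z)" R] norm_qpow_less_1[OF z]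
    by (auto intro: sums_summable)
  then have "summable h"
    unfolding h_def by (intro summable_mult) (subst summable_iff_shift)
  moreover have "\<forall>\<^sub>F k in sequentially. \<forall>y\<in>ball x 1 \<inter> - tzeta_poles. norm (tzeta_term (k + 2) z y) \<le> h k"
    unfolding eventually_sequentially
  proof (intro exI[of _ N] allI impI ballI)
    fix k y assume "N \<le> k" "y \<in> ball x 1 \<inter> - tzeta_poles"
    then have "norm y \<le> R" "R + ln (1 / 2) / ln q \<le> real k"
      using N norm_triangle_ineq2[of y x] by (auto simp: R_def dist_norm norm_minus_commute)
    then show "norm (tzeta_term (k + 2) z y) \<le> h k"
      unfolding h_def by (rule norm_tzeta_term_le)
  qed
  ultimately show "\<exists>d h. 0 < d \<and> summable h \<and>
      (\<forall>\<^sub>F n in sequentially. \<forall>y\<in>ball x d \<inter> - tzeta_poles. norm (tzeta_term (n + 2) z y) \<le> h n)"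
    by (intro exI[of _ 1] exI[of _ h]) auto
qed (use s in auto)

lemma tzeta_tail_at_0: "tzeta_tail z 0 = 0"
  by (simp add: tzeta_tail_def tzeta_term_def pochhammer_0_left)

lemma deriv_tzeta_term_at_0:
  "deriv (tzeta_term (k + 2) z) 0 = qpow (z * of_nat (k + 1)) / (of_nat (k + 2) * (1 - qpow (of_nat (k + 1))))"
proof -
  define g where "g s = pochhammer (s + 1) (k + 1) / fact (k + 2) * qpow (z * (s + of_nat (k + 1)))
      / (1 - qpow (s + of_nat (k + 1)))" for s
  have term_eq: "tzeta_term (k + 2) z = (\<lambda>s. s * g s)"
  proof
    fix s :: complex
    have "pochhammer s (k + 2) = s * pochhammer (s + 1) (k + 1)"
      using pochhammer_rec[of s "k + 1"] by simp
    then show "tzeta_term (k + 2) z s = s * g s"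
      by (simp add: tzeta_term_def g_def add_ac mult_ac)
  qed
  have "g holomorphic_on - tzeta_poles"
    unfolding g_def using qpow_ne_1_off_tzeta_poles[where k = "k + 2"]
    by (auto intro!: holomorphic_intros simp: add_ac)
  then have "(g has_field_derivative deriv g 0) (at 0)"
    using closed_tzeta_poles zero_notin_tzeta_poles by (intro holomorphic_derivI) auto
  then have "((\<lambda>s. s * g s) has_field_derivative g 0) (at 0)"
    using DERIV_mult[OF DERIV_ident] by fastforce
  then have "deriv (tzeta_term (k + 2) z) 0 = g 0"
    unfolding term_eq by (rule DERIV_imp_deriv)
  also have "g 0 = fact (k + 1) / fact (Suc (k + 1)) * qpow (z * of_nat (k + 1)) / (1 - qpow (of_nat (k + 1)))"
    unfolding g_def add_0_left pochhammer_fact[symmetric] by simp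
  also have "\<dots> = qpow (z * of_nat (k + 1)) / (of_nat (k + 2) * (1 - qpow (of_nat (k + 1))))"
    unfolding fact_Suc[of "k + 1"] by simp
  finally show ?thesis .
qed

definition qlogGamma_term :: "nat \<Rightarrow> nat \<Rightarrow> complex \<Rightarrow> complex" where
  "qlogGamma_term j k z = (of_real (ln q) * of_nat (k + 1)) ^ j * qpow (z * of_nat (k + 1))
      / (of_nat (k + 2) * (1 - qpow (of_nat (k + 1))))"

definition qlogGamma_series :: "nat \<Rightarrow> complex \<Rightarrow> complex" where
  "qlogGamma_series j z = (\<Sum>k. qlogGamma_term j k z)"

lemma has_field_derivative_tzeta_tail_at_0:
  assumes "0 < Re z"
  shows "(tzeta_tail z has_field_derivative qlogGamma_series 0 z) (at 0)"
  using has_field_derivative_tzeta_tail[OF assms zero_notin_tzeta_poles]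
  unfolding deriv_tzeta_term_at_0 qlogGamma_series_def qlogGamma_term_def by simp

definition tzeta_ext :: "complex \<Rightarrow> complex \<Rightarrow> complex" where
  "tzeta_ext z s = exp (s * of_real (ln (1 - q)))
      * (tzeta_term 0 z s + qpow_ratio s * qpow (z * s) + tzeta_tail z s)"

lemma tzeta_ext_eq_tzeta_series:
  assumes "0 < Re z" "1 < Re s"
  shows "tzeta_ext z s = tzeta_series q s z"
proof -
  have "tzeta_term 1 z s = qpow_ratio s * qpow (z * s)"
    using assms(2) by (auto simp: tzeta_term_def qpow_ratio_def)
  then have "(\<Sum>k. tzeta_term k z s) = tzeta_term 0 z s + qpow_ratio s * qpow (z * s) + tzeta_tail z s"
    using suminf_split_initial_segment[OF tzeta_series_expansion(1)[OF assms], of 2]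
    by (simp add: tzeta_tail_def numeral_2_eq_2)
  with tzeta_series_expansion(2)[OF assms] show ?thesis
    by (simp add: tzeta_ext_def tzeta_series_def sums_iff)
qed

lemma holomorphic_tzeta_ext:
  assumes "0 < Re z"
  shows "tzeta_ext z holomorphic_on - tzeta_poles"
proof -
  have "tzeta_tail z holomorphic_on - tzeta_poles"
    using has_field_derivative_tzeta_tail[OF assms] closed_tzeta_poles
    by (auto simp: holomorphic_on_open field_differentiable_def open_Compl)
  then show ?thesis
    unfolding tzeta_ext_def[abs_def]
    using holomorphic_tzeta_term[of 0 z] holomorphic_qpow_ratio by (auto intro!: holomorphic_intros)
qed

lemma deriv_tzeta_cont_eq_tzeta_ext:
  assumes "0 < Re z"
  shows "deriv (tzeta_cont q z) 0 = deriv (tzeta_ext z) 0"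
  using countable_tzeta_poles closed_tzeta_poles zero_notin_tzeta_poles notin_tzeta_poles_if_Re_gt_1
    holomorphic_tzeta_ext[OF assms] tzeta_ext_eq_tzeta_series[OF assms]
  by (rule deriv_tzeta_cont_eq)

section \<open>The derivative at \<open>s = 0\<close> and the functional equation\<close>

lemma qpow_minus_1: "qpow (- 1) = 1 - of_real ((q - 1) / q)"
  using qpow_of_real[of "- 1"] q_pos by (simp add: powr_minus field_simps)

lemma has_field_derivative_tzeta_term_0_at_0:
  "(tzeta_term 0 z has_field_derivative
     of_real (ln q) * (z / (1 - qpow (- 1)) + qpow (- 1) / (1 - qpow (- 1))\<^sup>2) * qpow (- z)) (at 0)"
proof -
  define w where "w = 1 - qpow (- 1)"
  have w: "w \<noteq> 0" "qpow (- 1) = 1 - w" by (auto simp: w_def qpow_eq_1_iff)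
  have "tzeta_term 0 z = (\<lambda>s. qpow (z * (s - 1)) / (1 - qpow (s - 1)))"
    by (simp add: tzeta_term_def[abs_def])
  then show ?thesis
    unfolding w_def[symmetric] w(2) using w(1)
    by (auto intro!: derivative_eq_intros simp: w(2) field_simps power2_eq_square)
qed

definition qlogGamma_a :: real where
  "qlogGamma_a = ln (1 - q) * q / (q - 1) + ln q * q / (q - 1)\<^sup>2"

definition qlogGamma_b :: real where
  "qlogGamma_b = ln q * q / (q - 1)"

text \<open>The term \<open>(a + b z) q^(-z) - z\<close> comes from the summands \<open>k = 0\<close> and \<open>k = 1\<close> of the
  expansion, the series from the tail.\<close>
definition qlogGamma :: "complex \<Rightarrow> complex" where
  "qlogGamma z = (of_real qlogGamma_a + of_real qlogGamma_b * z) * qpow (- z) - z + qlogGamma_series 0 z"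

lemma deriv_tzeta_ext_at_0:
  assumes "0 < Re z"
  shows "deriv (tzeta_ext z) 0 = qlogGamma z + (deriv qpow_ratio 0 - of_real (ln (1 - q)) / of_real (ln q))"
proof -
  define r where "r = (q - 1) / q"
  have r: "r \<noteq> 0" using q_pos q_less_1 by (simp add: r_def)
  have ids: "ln (1 - q) * q / (q - 1) = ln (1 - q) / r" "ln q * q / (q - 1)\<^sup>2 = ln q * (1 - r) / r\<^sup>2"
      "ln q * q / (q - 1) = ln q / r"
    using q_pos q_less_1 by (simp_all add: r_def field_simps power2_eq_square)
  have "(qpow_ratio has_field_derivative deriv qpow_ratio 0) (at 0)"
    using holomorphic_qpow_ratio closed_tzeta_poles zero_notin_tzeta_poles
    by (intro holomorphic_derivI) auto
  then have "(tzeta_ext z has_field_derivative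
      of_real (ln (1 - q)) * (tzeta_term 0 z 0 + qpow_ratio 0 * qpow (z * 0) + tzeta_tail z 0)
      + (of_real (ln q) * (z / (1 - qpow (- 1)) + qpow (- 1) / (1 - qpow (- 1))\<^sup>2) * qpow (- z)
         + (deriv qpow_ratio 0 * qpow (z * 0) + qpow_ratio 0 * (of_real (ln q) * z * qpow (z * 0)))
         + qlogGamma_series 0 z)) (at 0)"
    unfolding tzeta_ext_def[abs_def]
    by - (rule derivative_eq_intros has_field_derivative_tzeta_term_0_at_0
          has_field_derivative_tzeta_tail_at_0[OF assms] refl | assumption | simp)+
  then have "deriv (tzeta_ext z) 0 = of_real (ln (1 - q)) * (qpow (- z) / of_real r - 1 / of_real (ln q))
      + of_real (ln q) * (z / of_real r + (1 - of_real r) / (of_real r)\<^sup>2) * qpow (- z)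
      + (deriv qpow_ratio 0 - z) + qlogGamma_series 0 z"
    using ln_q_neg
    by (simp add: DERIV_imp_deriv tzeta_term_def qpow_ratio_def tzeta_tail_at_0 qpow_minus_1 r_def)
  also have "of_real (ln (1 - q)) * (qpow (- z) / of_real r - 1 / of_real (ln q))
      + of_real (ln q) * (z / of_real r + (1 - of_real r) / (of_real r)\<^sup>2) * qpow (- z)
      + (deriv qpow_ratio 0 - z) + qlogGamma_series 0 z
      = qlogGamma z + (deriv qpow_ratio 0 - of_real (ln (1 - q)) / of_real (ln q))"
    unfolding qlogGamma_def qlogGamma_a_def qlogGamma_b_def ids
    using r ln_q_neg by (simp add: field_simps power2_eq_square)
  finally show ?thesis .
qed

lemma tGamma_eq_exp_qlogGamma:
  assumes "0 < Re z"
  shows "tGamma q z = exp (qlogGamma z - qlogGamma 1)"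
  using deriv_tzeta_ext_at_0[OF assms] deriv_tzeta_ext_at_0[of 1]
    deriv_tzeta_cont_eq_tzeta_ext[OF assms] deriv_tzeta_cont_eq_tzeta_ext[of 1]
  by (simp add: tGamma_def)

lemma tzeta_series_shift:
  assumes "0 < Re z" "1 < Re s"
  shows "tzeta_series q s z = qpow (z * (s - 1)) * qnum q z powr (- s) + tzeta_series q s (z + 1)"
proof -
  let ?f = "\<lambda>n. complex_of_real q powr ((of_nat n + z) * (s - 1)) * qnum q (of_nat n + z) powr (- s)"
  have "summable ?f" using tzeta_series_expansion(2)[OF assms] by (rule sums_summable)
  from suminf_split_head[OF this] show ?thesis
    by (simp add: tzeta_series_def powr_eq_qpow add_ac)
qed

lemma deriv_tzeta_ext_shift:
  assumes z: "0 < Re z"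
  shows "deriv (tzeta_ext z) 0
    = qpow (- z) * (of_real (ln q) * z - Ln (qnum q z)) + deriv (tzeta_ext (z + 1)) 0"
proof -
  define g where "g s = qpow (z * (s - 1)) * exp (- s * Ln (qnum q z)) + tzeta_ext (z + 1) s" for s
  have z1: "0 < Re (z + 1)" using z by simp
  have "tzeta_ext z s = g s" if "s \<in> - tzeta_poles" for s
  proof (rule analytic_continuation_open[where f = "tzeta_ext z" and g = g,
        OF open_halfspace_Re_gt _ _ connected_Compl_tzeta_poles])
    show "open (- tzeta_poles)" using closed_tzeta_poles by auto
    show "{s. 1 < Re s} \<subseteq> - tzeta_poles" using notin_tzeta_poles_if_Re_gt_1 by auto
    show "g holomorphic_on - tzeta_poles"
      unfolding g_def[abs_def] using holomorphic_tzeta_ext[OF z1] by (auto intro!: holomorphic_intros)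
    show "tzeta_ext z s = g s" if "s \<in> {s. 1 < Re s}" for s
      using that qnum_nonzero[OF z] tzeta_series_shift[OF z, of s]
        tzeta_ext_eq_tzeta_series[OF z, of s] tzeta_ext_eq_tzeta_series[OF z1, of s]
      by (simp add: g_def powr_def)
  qed (use holomorphic_tzeta_ext[OF z] that in \<open>auto intro!: exI[of _ 2]\<close>)
  then have "\<forall>\<^sub>F s in nhds 0. tzeta_ext z s = g s"
    unfolding eventually_nhds using closed_tzeta_poles zero_notin_tzeta_poles
    by (intro exI[of _ "- tzeta_poles"]) auto
  then have "deriv (tzeta_ext z) 0 = deriv g 0"
    by (rule deriv_cong_ev) simp
  also have "\<dots> = qpow (- z) * (of_real (ln q) * z - Ln (qnum q z)) + deriv (tzeta_ext (z + 1)) 0"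
  proof (rule DERIV_imp_deriv)
    have "(tzeta_ext (z + 1) has_field_derivative deriv (tzeta_ext (z + 1)) 0) (at 0)"
      using holomorphic_tzeta_ext[OF z1] closed_tzeta_poles zero_notin_tzeta_poles
      by (intro holomorphic_derivI) auto
    then show "(g has_field_derivative
        qpow (- z) * (of_real (ln q) * z - Ln (qnum q z)) + deriv (tzeta_ext (z + 1)) 0) (at 0)"
      unfolding g_def[abs_def]
      by - (rule derivative_eq_intros refl | assumption | simp add: algebra_simps)+
  qed
  finally show ?thesis .
qed

lemma tGamma_add_1:
  assumes z: "0 < Re z"
  shows "tGamma q (z + 1) = exp (qpow (- z) * (Ln (qnum q z) - of_real (ln q) * z)) * tGamma q z"
proof -
  have "0 < Re (z + 1)" using z by simp
  then show ?thesis
    using deriv_tzeta_ext_shift[OF z] deriv_tzeta_cont_eq_tzeta_ext[OF z]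
      deriv_tzeta_cont_eq_tzeta_ext[of "z + 1"]
    by (simp add: tGamma_def algebra_simps flip: exp_add)
qed

lemma tGamma_1: "tGamma q 1 = 1"
  by (simp add: tGamma_def)

lemma tGamma_of_nat_add_1:
  "tGamma q (of_nat n + 1) = exp (\<Sum>k=1..n. qpow (- of_nat k) * (Ln (qnum q (of_nat k)) - of_real (ln q) * of_nat k))"
proof (induction n)
  case (Suc n)
  let ?t = "\<lambda>k::nat. qpow (- of_nat k) * (Ln (qnum q (of_nat k)) - of_real (ln q) * of_nat k)"
  have "tGamma q (of_nat (Suc n) + 1) = exp (?t (Suc n)) * tGamma q (of_nat n + 1)"
    using tGamma_add_1[of "of_nat (Suc n)"] by (simp only: of_nat_Suc add.commute) simp
  also have "\<dots> = exp (?t (Suc n)) * exp (\<Sum>k=1..n. ?t k)"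
    by (simp only: Suc.IH)
  also have "\<dots> = exp (\<Sum>k=1..Suc n. ?t k)"
    by (simp add: exp_add[symmetric] add.commute)
  finally show ?case .
qed (simp add: tGamma_1)

lemma qshift_powr_eq_exp:
  assumes "0 < x"
  shows "(complex_of_real q powr (- of_real x) * qnum q (of_real x)) powr (complex_of_real q powr (- of_real x))
    = exp (qpow (- of_real x) * (Ln (qnum q (of_real x)) - of_real (ln q) * of_real x))"
proof -
  define A where "A = complex_of_real q powr (- of_real x)"
  define Q where "Q = qnum q (of_real x)"
  have A: "A = qpow (- of_real x)" "A = of_real (q powr (- x))"
    using qpow_of_real[of "- x"] by (simp_all add: A_def powr_eq_qpow)
  have Q: "Q \<noteq> 0" using assms by (simp add: Q_def qnum_nonzero)
  have "Ln (A * Q) = Ln (of_real (q powr (- x))) + Ln Q"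
    unfolding A(2) using Q q_pos by (intro Ln_times_of_real) auto
  also have "\<dots> = Ln Q - of_real (ln q) * of_real x"
    using q_pos by (simp add: Ln_of_real ln_powr)
  finally have Ln_AQ: "Ln (A * Q) = Ln Q - of_real (ln q) * of_real x" .
  have "A * Q \<noteq> 0" using Q q_pos by (simp add: A(2))
  then have "(A * Q) powr A = exp (A * (Ln Q - of_real (ln q) * of_real x))"
    by (simp add: powr_def Ln_AQ)
  then show ?thesis by (simp add: A_def Q_def A(1)[unfolded A_def])
qed

lemma qfactorial_eq_exp:
  "complex_of_real q powr (- (\<Sum>k=1..n. of_nat k * complex_of_real q powr (- of_nat k)))
     * (\<Prod>k=1..n. qnum q (of_nat k) powr (complex_of_real q powr (- of_nat k)))
   = exp (\<Sum>k=1..n. qpow (- of_nat k) * (Ln (qnum q (of_nat k)) - of_real (ln q) * of_nat k))"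
proof -
  have "qnum q (of_nat k) powr w = exp (w * Ln (qnum q (of_nat k)))" if "k \<in> {1..n}" for k w
    using qnum_nonzero[of "of_nat k"] that by (simp add: powr_def)
  then show ?thesis
    by (simp add: powr_eq_qpow qpow_def sum_distrib_left sum_subtractf algebra_simps
        flip: exp_add exp_sum)
qed

section \<open>Log-convexity\<close>

lemma norm_qlogGamma_term_le:
  assumes "d \<le> Re y"
  shows "norm (qlogGamma_term j k y)
    \<le> \<bar>ln q\<bar> ^ j * exp (ln q * d) / (1 - q) * (real (k + 1) ^ j * exp (ln q * d) ^ k)"
proof -
  have num: "norm (qpow (y * of_nat (k + 1))) \<le> exp (ln q * d) * exp (ln q * d) ^ k"
  proof -
    have "ln q * Re y \<le> ln q * d" using assms ln_q_neg by (simp add: mult_left_mono_neg)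
    then have "exp (real (k + 1) * (ln q * Re y)) \<le> exp (real (k + 1) * (ln q * d))"
      by (simp add: mult_left_mono)
    then show ?thesis by (simp add: norm_qpow exp_of_nat_mult[symmetric] algebra_simps exp_add[symmetric])
  qed
  have denom: "1 - q \<le> norm (of_nat (k + 2) * (1 - qpow (of_nat (k + 1))))"
  proof -
    have "ln q * real (k + 1) \<le> ln q" using ln_q_neg by (simp add: mult_le_cancel_left1)
    then have "norm (qpow (of_nat (k + 1))) \<le> q"
      using q_pos by (simp add: norm_qpow order.trans[OF _ eq_refl[OF exp_ln]])
    then have "1 - q \<le> norm (1 - qpow (of_nat (k + 1)))"
      using norm_triangle_ineq2[of 1 "qpow (of_nat (k + 1))"] by simp
    also have "\<dots> \<le> norm (of_nat (k + 2) :: complex) * norm (1 - qpow (of_nat (k + 1)))"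
      using mult_right_mono[OF _ norm_ge_zero, of 1 "norm (of_nat (k + 2) :: complex)"]
      unfolding norm_of_nat by simp
    finally show ?thesis by (simp add: norm_mult)
  qed
  have "norm (qlogGamma_term j k y) = (\<bar>ln q\<bar> * real (k + 1)) ^ j * norm (qpow (y * of_nat (k + 1)))
      / norm (of_nat (k + 2) * (1 - qpow (of_nat (k + 1))))"
    unfolding qlogGamma_term_def norm_divide norm_mult norm_power norm_of_real norm_of_nat
    by (simp only: of_nat_add of_nat_1)
  also have "\<dots> \<le> (\<bar>ln q\<bar> * real (k + 1)) ^ j * (exp (ln q * d) * exp (ln q * d) ^ k) / (1 - q)"
    using num denom q_less_1 by (intro frac_le mult_left_mono) auto
  finally show ?thesis by (simp add: power_mult_distrib mult_ac)
qed

lemma summable_qlogGamma_term: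
  assumes "0 < Re z"
  shows "summable (\<lambda>k. qlogGamma_term j k z)"
proof (rule summable_comparison_test')
  have "exp (ln q * Re z) < 1" using assms ln_q_neg by (simp add: mult_neg_pos)
  then show "summable (\<lambda>k. \<bar>ln q\<bar> ^ j * exp (ln q * Re z) / (1 - q) * (real (k + 1) ^ j * exp (ln q * Re z) ^ k))"
    by (intro summable_mult summable_power_mult_geometric) auto
qed (rule norm_qlogGamma_term_le, simp)

lemma has_field_derivative_qlogGamma_series:
  assumes "0 < Re z"
  shows "(qlogGamma_series j has_field_derivative qlogGamma_series (Suc j) z) (at z)"
  unfolding qlogGamma_series_def[abs_def]
proof (rule has_field_derivative_suminf[of "{z. 0 < Re z}"])
  show "(qlogGamma_term j k has_field_derivative qlogGamma_term (Suc j) k x) (at x)" for k x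
  proof -
    have "((\<lambda>z. qpow (z * of_nat (k + 1))) has_field_derivative
        of_real (ln q) * of_nat (k + 1) * qpow (x * of_nat (k + 1))) (at x)"
      by (auto intro!: derivative_eq_intros)
    from DERIV_cdivide[OF DERIV_cmult[OF this, of "(of_real (ln q) * of_nat (k + 1)) ^ j"],
        of "of_nat (k + 2) * (1 - qpow (of_nat (k + 1)))"]
    show ?thesis unfolding qlogGamma_term_def[abs_def] by (simp add: mult_ac)
  qed
  fix x :: complex assume "x \<in> {z. 0 < Re z}"
  then have d: "0 < Re x / 2" by simp
  define h where "h k = \<bar>ln q\<bar> ^ j * exp (ln q * (Re x / 2)) / (1 - q)
      * (real (k + 1) ^ j * exp (ln q * (Re x / 2)) ^ k)" for k
  have "summable h"
    unfolding h_def using d ln_q_neg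
    by (intro summable_mult summable_power_mult_geometric) (auto simp: mult_neg_pos)
  moreover have "norm (qlogGamma_term j k y) \<le> h k" if "y \<in> ball x (Re x / 2)" for k y
    unfolding h_def using that abs_Re_le_cmod[of "x - y"]
    by (intro norm_qlogGamma_term_le) (auto simp: dist_norm)
  ultimately show "\<exists>d h. 0 < d \<and> summable h \<and>
      (\<forall>\<^sub>F k in sequentially. \<forall>y\<in>ball x d \<inter> {z. 0 < Re z}. norm (qlogGamma_term j k y) \<le> h k)"
    using d by (intro exI[of _ "Re x / 2"] exI[of _ h]) (auto intro: always_eventually)
qed (use assms open_halfspace_Re_gt in auto)

definition qlogGamma' :: "complex \<Rightarrow> complex" where
  "qlogGamma' z = (of_real qlogGamma_b - of_real (ln q) * (of_real qlogGamma_a + of_real qlogGamma_b * z))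
      * qpow (- z) - 1 + qlogGamma_series 1 z"

definition qlogGamma'' :: "complex \<Rightarrow> complex" where
  "qlogGamma'' z = ((of_real (ln q))\<^sup>2 * (of_real qlogGamma_a + of_real qlogGamma_b * z)
      - 2 * of_real (ln q) * of_real qlogGamma_b) * qpow (- z) + qlogGamma_series 2 z"

lemma has_field_derivative_qlogGamma:
  "0 < Re z \<Longrightarrow> (qlogGamma has_field_derivative qlogGamma' z) (at z)"
  unfolding qlogGamma_def[abs_def] qlogGamma'_def
  by (rule derivative_eq_intros refl has_field_derivative_qlogGamma_series | assumption
      | simp add: algebra_simps)+

lemma has_field_derivative_qlogGamma':
  "0 < Re z \<Longrightarrow> (qlogGamma' has_field_derivative qlogGamma'' z) (at z)"
  unfolding qlogGamma'_def[abs_def] qlogGamma''_def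
  by (rule derivative_eq_intros refl has_field_derivative_qlogGamma_series[where j = 1, simplified]
      | assumption | simp add: algebra_simps power2_eq_square numeral_2_eq_2)+

lemma qlogGamma_term_of_real:
  "qlogGamma_term j k (of_real t)
    = of_real ((ln q * real (k + 1)) ^ j * q powr (t * real (k + 1)) / (real (k + 2) * (1 - q powr real (k + 1))))"
  using qpow_of_real[of "t * real (k + 1)"] qpow_of_real[of "real (k + 1)"]
  by (simp add: qlogGamma_term_def)

lemma qlogGamma_series_of_real:
  assumes "0 < t"
  shows "qlogGamma_series j (of_real t)
    = of_real (\<Sum>k. (ln q * real (k + 1)) ^ j * q powr (t * real (k + 1)) / (real (k + 2) * (1 - q powr real (k + 1))))"
proof -
  have "summable (\<lambda>k. (ln q * real (k + 1)) ^ j * q powr (t * real (k + 1))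
      / (real (k + 2) * (1 - q powr real (k + 1))))"
    using summable_qlogGamma_term[of "of_real t" j] assms
    unfolding qlogGamma_term_of_real summable_complex_of_real by simp
  then show ?thesis
    unfolding qlogGamma_series_def qlogGamma_term_of_real by (rule suminf_of_real[symmetric])
qed

lemma qlogGamma_of_real_in_Reals: "0 < t \<Longrightarrow> qlogGamma (of_real t) \<in> \<real>"
  by (simp add: qlogGamma_def qlogGamma_series_of_real qpow_of_real[of "- t", simplified])

lemma qlogGamma''_coeff_nonneg:
  assumes "1 \<le> t"
  shows "0 \<le> (ln q)\<^sup>2 * (qlogGamma_a + qlogGamma_b * t) - 2 * ln q * qlogGamma_b"
proof -
  define L where "L = ln q"
  have L: "L < 0" using ln_q_neg by (simp add: L_def)
  have "- L \<le> 1 / q - 1"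
    using ln_le_minus_one[of "1 / q"] q_pos by (simp add: L_def ln_div)
  then have "q - 1 \<le> q * L"
    using q_pos by (simp add: field_simps)
  moreover have "(1 - q) * (- L) \<le> (1 - q) * (- L * t)"
    using assms L q_less_1 by (intro mult_left_mono) (auto simp: mult_le_cancel_left1)
  moreover have "L * q \<le> 0" using L q_pos by (simp add: mult_nonpos_nonneg)
  ultimately have "0 \<le> L + (q - 1) * (L * t - 2)"
    by (simp add: algebra_simps)
  then have "0 \<le> q * L\<^sup>2 / (q - 1)\<^sup>2 * (L + (q - 1) * (L * t - 2))"
    using q_pos by simp
  moreover have "0 \<le> L\<^sup>2 * (ln (1 - q) * q / (q - 1))"
    using q_pos q_less_1 by (intro mult_nonneg_nonneg divide_nonpos_neg) (auto intro: mult_nonpos_nonneg)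
  moreover have "(ln q)\<^sup>2 * (qlogGamma_a + qlogGamma_b * t) - 2 * ln q * qlogGamma_b
      = L\<^sup>2 * (ln (1 - q) * q / (q - 1)) + q * L\<^sup>2 / (q - 1)\<^sup>2 * (L + (q - 1) * (L * t - 2))"
  proof -
    define c where "c = q - 1"
    have "c \<noteq> 0" using q_less_1 by (simp add: c_def)
    then show ?thesis
      unfolding qlogGamma_a_def qlogGamma_b_def L_def[symmetric] c_def[symmetric]
      by (simp add: field_simps power2_eq_square)
  qed
  ultimately show ?thesis by linarith
qed

lemma qlogGamma''_of_real:
  assumes "1 \<le> t"
  shows "qlogGamma'' (of_real t) \<in> \<real>" and "0 \<le> Re (qlogGamma'' (of_real t))"
proof -
  define S where "S = (\<Sum>k. (ln q * real (k + 1))\<^sup>2 * q powr (t * real (k + 1))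
      / (real (k + 2) * (1 - q powr real (k + 1))))"
  have "0 \<le> S"
  proof -
    have "summable (\<lambda>k. qlogGamma_term 2 k (of_real t))"
      using assms by (intro summable_qlogGamma_term) simp
    moreover have "q powr real (k + 1) < 1" for k
      using q_pos q_less_1 by (simp only: powr_realpow[OF q_pos] power_less_one_iff) simp
    ultimately show ?thesis
      unfolding S_def qlogGamma_term_of_real summable_complex_of_real
      by (intro suminf_nonneg) (auto intro!: divide_nonneg_pos mult_pos_pos)
  qed
  moreover have "qlogGamma'' (of_real t)
      = of_real (((ln q)\<^sup>2 * (qlogGamma_a + qlogGamma_b * t) - 2 * ln q * qlogGamma_b) * q powr (- t) + S)"
    using assms qpow_of_real[of "- t"]
    by (simp add: qlogGamma''_def qlogGamma_series_of_real S_def)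
  ultimately show "qlogGamma'' (of_real t) \<in> \<real>" "0 \<le> Re (qlogGamma'' (of_real t))"
    using qlogGamma''_coeff_nonneg[OF assms] by simp_all
qed

lemma higher_deriv_2_Ln_tGamma:
  assumes "0 \<le> x"
  shows "(deriv ^^ 2) (\<lambda>w. Ln (tGamma q (w + 1))) (of_real x) = qlogGamma'' (of_real x + 1)"
proof -
  define g where "g w = qlogGamma (w + 1) - qlogGamma 1" for w
  define S where "S = {w. - 1 < Re w}"
  have S: "open S" "of_real x \<in> S" using assms by (auto simp: S_def open_halfspace_Re_gt)
  have g': "(g has_field_derivative qlogGamma' (w + 1)) (at w)" if "w \<in> S" for w
    unfolding g_def using that
    by (auto intro!: derivative_eq_intros DERIV_chain2[OF has_field_derivative_qlogGamma] simp: S_def)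
  have "(deriv ^^ 2) (\<lambda>w. Ln (tGamma q (w + 1))) (of_real x) = (deriv ^^ 2) g (of_real x)"
  proof (rule higher_deriv_Ln_of_exp[OF S])
    show "isCont g (of_real x)" using g'[OF S(2)] by (rule DERIV_isCont)
    have "g (of_real x) \<in> \<real>"
      unfolding g_def using qlogGamma_of_real_in_Reals[of "x + 1"] qlogGamma_of_real_in_Reals[of 1] assms
      by auto
    then show "\<bar>Im (g (of_real x))\<bar> < pi" by (simp add: complex_is_Real_iff)
    show "tGamma q (w + 1) = exp (g w)" if "w \<in> S" for w
      unfolding g_def using that by (intro tGamma_eq_exp_qlogGamma) (simp add: S_def)
  qed
  also have "\<dots> = deriv (\<lambda>w. qlogGamma' (w + 1)) (of_real x)"
  proof -
    have "\<forall>\<^sub>F w in nhds (of_real x). deriv g w = qlogGamma' (w + 1)"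
      using eventually_nhds_in_open[OF S] by eventually_elim (rule DERIV_imp_deriv[OF g'])
    then show ?thesis by (simp add: numeral_2_eq_2 deriv_cong_ev)
  qed
  also have "\<dots> = qlogGamma'' (of_real x + 1)"
  proof -
    have "((\<lambda>w. qlogGamma' (w + 1)) has_field_derivative qlogGamma'' (of_real x + 1) * 1) (at (of_real x))"
      using assms by (intro DERIV_chain2[OF has_field_derivative_qlogGamma']) (auto intro!: derivative_eq_intros)
    then show ?thesis by (simp add: DERIV_imp_deriv)
  qed
  finally show ?thesis .
qed

end

theorem propositionA1:
  fixes q :: real
  assumes "0 < q" and "q < 1"
  shows "(\<forall>x::real. 0 < x \<longrightarrow>
            tGamma q (of_real x + 1) =
              (complex_of_real q powr (- of_real x) * qnum q (of_real x))
                powr (complex_of_real q powr (- of_real x)) * tGamma q (of_real x))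
       \<and> tGamma q 1 = 1
       \<and> (\<forall>x::real. 0 \<le> x \<longrightarrow>
            (deriv ^^ 2) (\<lambda>w. Ln (tGamma q (w + 1))) (of_real x) \<in> \<real> \<and>
            0 \<le> Re ((deriv ^^ 2) (\<lambda>w. Ln (tGamma q (w + 1))) (of_real x)))
       \<and> (\<forall>n::nat. 0 < n \<longrightarrow>
            tGamma q (of_nat n + 1) =
              complex_of_real q powr (- (\<Sum>k=1..n. of_nat k * complex_of_real q powr (- of_nat k)))
              * (\<Prod>k=1..n. (qnum q (of_nat k)) powr (complex_of_real q powr (- of_nat k))))"
proof -
  interpret q_parameter q using assms by unfold_locales
  have "tGamma q (of_real x + 1) = (complex_of_real q powr (- of_real x) * qnum q (of_real x))
      powr (complex_of_real q powr (- of_real x)) * tGamma q (of_real x)" if "0 < x" for x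
    using tGamma_add_1[of "of_real x"] qshift_powr_eq_exp[OF that] that by simp
  moreover have "(deriv ^^ 2) (\<lambda>w. Ln (tGamma q (w + 1))) (of_real x) \<in> \<real> \<and>
      0 \<le> Re ((deriv ^^ 2) (\<lambda>w. Ln (tGamma q (w + 1))) (of_real x))" if "0 \<le> x" for x
    using higher_deriv_2_Ln_tGamma[OF that] qlogGamma''_of_real[of "x + 1"] that by simp
  ultimately show ?thesis
    using tGamma_1 tGamma_of_nat_add_1 qfactorial_eq_exp by auto
qed

end
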